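(* For all non-negative integers $n,k,m$, $$\det\Big(C_{2n+2i+2j+4m-2}^{(2k+2m-1)}\Big)_{0\le i,j\le k-1}=\det\Big(C_{-2n-2i-2j}^{(2k+2m-1)}\Big)_{0\le i,j\le m-1},$$ where a $0\times0$ determinant equals $1$.
   Context: For $N\ge0$, $C_N^{(K)}$ is the number of lattice paths with steps $(1,1),(1,-1)$ from $(0,0)$ to $(N,0)$ never going below the $x$-axis nor above $y=K$. For odd $K$ the generating function $F(x)=\sum_{N\ge0}C_N^{(K)}x^N$ is a rational function $p/q$ with $\deg p<\deg q$, $q(0)\neq0$; $C_N^{(K)}$ for negative $N$ is defined by extending the associated linear recurrence backwards, equivalently $\sum_{N\ge1}C_{-N}^{(K)}x^N=-F(1/x)$. *)

theory Defs
  imports "HOL-Computational_Algebra.Polynomial" "Jordan_Normal_Form.Determinant"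
begin

definition bounded_paths :: "nat \<Rightarrow> nat \<Rightarrow> int list set" where
  "bounded_paths K N = {s. length s = N \<and> set s \<subseteq> {1, -1} \<and> sum_list s = 0 \<and>
      (\<forall>j\<le>N. 0 \<le> sum_list (take j s) \<and> sum_list (take j s) \<le> int K)}"

definition C_nat :: "nat \<Rightarrow> nat \<Rightarrow> nat" where
  "C_nat K N = card (bounded_paths K N)"

text \<open>Extension to all integer indices: the unique two-sided sequence that agrees
  with C_nat on N \<ge> 0 and satisfies, for all integers N, the linear recurrence given by
  a denominator polynomial q with q(0) \<noteq> 0 (i.e. F = p/q with deg p < deg q),
  extended backwards.\<close>
definition C :: "nat \<Rightarrow> int \<Rightarrow> real" where
  "C K = (THE c :: int \<Rightarrow> real.
      (\<forall>n::nat. c (int n) = real (C_nat K n)) \<and>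
      (\<exists>q :: real poly. poly q 0 \<noteq> 0 \<and>
          (\<forall>N::int. (\<Sum>i\<le>degree q. coeff q i * c (N - int i)) = 0)))"

end

theory Submission
  imports Defs
begin

text \<open>Write K = 2h - 1 with h = k + m. A path returning to height 0 has even length, and C(2N)
  is the (0,0) entry of B^N, where B is the h x h matrix counting two-step walks between the even
  heights 0, 2, ..., 2h - 2. Since B = D^T D with D unitriangular, det B = 1; and the first unit
  vector is cyclic for B, its Krylov matrix being unitriangular. So the powers of B satisfy a
  recurrence of order h with nonzero constant term, and the backward extension of C is given by
  negative powers: C(2z) = (B^z)(0,0) for every integer z. Reflecting the strip gives
  (B^z)(h-1,h-1) = (B^(z+1))(0,0).

  Both determinants are read off one h x h determinant with entries (B^(e_j + s + e'_j'))(v_j, v_j'),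
  where the first k indices carry exponents 0, ..., k - 1 at vertex 0 and the last m indices carry
  exponents m - 1, ..., 0 at vertex h - 1. The matrix factors through B^s, so its determinant does
  not depend on s. A walk cannot cover more distance than its length, so for s = n + 2m - 1 the
  matrix is block upper triangular and for s = 0 block lower triangular; in each case one diagonal
  block is a Hankel matrix of determinant 1 and the other is one side of the identity.\<close>

section \<open>Bounded walks\<close>

fun walks :: "nat \<Rightarrow> nat \<Rightarrow> int \<Rightarrow> int \<Rightarrow> nat" where
  "walks K 0 x y = (if 0 \<le> x \<and> x \<le> int K \<and> x = y then 1 else 0)"
| "walks K (Suc N) x y =
     (if 0 \<le> x \<and> x \<le> int K then walks K N (x + 1) y + walks K N (x - 1) y else 0)"

definition walk_steps :: "nat \<Rightarrow> nat \<Rightarrow> int \<Rightarrow> int \<Rightarrow> int list set" where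
  "walk_steps K N x y = {s. length s = N \<and> set s \<subseteq> {1, -1} \<and> x + sum_list s = y \<and>
      (\<forall>j\<le>N. 0 \<le> x + sum_list (take j s) \<and> x + sum_list (take j s) \<le> int K)}"

lemma finite_walk_steps: "finite (walk_steps K N x y)"
proof (rule finite_subset)
  show "walk_steps K N x y \<subseteq> {s. set s \<subseteq> {1, -1} \<and> length s = N}"
    unfolding walk_steps_def by auto
qed (rule finite_lists_length_eq, simp)

lemma walk_steps_0: "walk_steps K 0 x y = (if 0 \<le> x \<and> x \<le> int K \<and> x = y then {[]} else {})"
  by (auto simp: walk_steps_def)

lemma walk_steps_Suc:
  assumes "0 \<le> x" "x \<le> int K"
  shows "walk_steps K (Suc N) x y = Cons 1 ` walk_steps K N (x + 1) y \<union> Cons (-1) ` walk_steps K N (x - 1) y"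
proof (rule Set.set_eqI)
  have all_le_Suc: "(\<forall>j\<le>Suc N. Q j) \<longleftrightarrow> Q 0 \<and> (\<forall>j\<le>N. Q (Suc j))" for Q
    by (metis Suc_le_mono le0 not0_implies_Suc)
  fix s
  show "s \<in> walk_steps K (Suc N) x y \<longleftrightarrow>
    s \<in> Cons 1 ` walk_steps K N (x + 1) y \<union> Cons (-1) ` walk_steps K N (x - 1) y"
    by (cases s) (use assms in \<open>auto simp: walk_steps_def all_le_Suc algebra_simps\<close>)
qed

lemma card_walk_steps: "card (walk_steps K N x y) = walks K N x y"
proof (induction N arbitrary: x)
  case 0
  then show ?case by (simp add: walk_steps_0)
next
  case (Suc N)
  show ?case
  proof (cases "0 \<le> x \<and> x \<le> int K")
    case True
    have "card (Cons 1 ` walk_steps K N (x + 1) y \<union> Cons (-1) ` walk_steps K N (x - 1) y)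
        = card (walk_steps K N (x + 1) y) + card (walk_steps K N (x - 1) y)"
      by (subst card_Un_disjoint) (auto simp: finite_walk_steps card_image)
    with True Suc.IH show ?thesis by (simp add: walk_steps_Suc)
  next
    case False
    then have "walk_steps K (Suc N) x y = {}"
      by (auto simp: walk_steps_def dest: spec[of _ 0])
    with False show ?thesis by auto
  qed
qed

lemma C_nat_eq_walks: "C_nat K N = walks K N 0 0"
proof -
  have "bounded_paths K N = walk_steps K N 0 0"
    unfolding bounded_paths_def walk_steps_def by auto
  then show ?thesis by (simp add: C_nat_def card_walk_steps)
qed

lemma walks_start_outside: "\<not> (0 \<le> x \<and> x \<le> int K) \<Longrightarrow> walks K N x y = 0"
  by (cases N) auto

lemma walks_end_outside: "\<not> (0 \<le> y \<and> y \<le> int K) \<Longrightarrow> walks K N x y = 0"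
  by (induction N arbitrary: x) auto

lemma walks_Suc_last:
  "walks K (Suc N) x y = (if 0 \<le> y \<and> y \<le> int K then walks K N x (y + 1) + walks K N x (y - 1) else 0)"
proof (induction N arbitrary: x)
  case (Suc N)
  show ?case
  proof (cases "0 \<le> y \<and> y \<le> int K")
    case True
    then show ?thesis using Suc[of "x + 1"] Suc[of "x - 1"] by (auto simp: walks_start_outside)
  next
    case False
    then show ?thesis using walks_end_outside[OF False, of "Suc (Suc N)"] by (auto simp del: walks.simps)
  qed
qed auto

lemma walks_reflect: "walks K N x y = walks K N (int K - x) (int K - y)"
proof (induction N arbitrary: x)
  case (Suc N)
  have shift: "int K - (x + 1) = int K - x - 1" "int K - (x - 1) = int K - x + 1" by auto
  show ?case using Suc[of "x + 1"] Suc[of "x - 1"] unfolding shift by auto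
qed auto

lemma walks_odd: "odd (int N + x + y) \<Longrightarrow> walks K N x y = 0"
proof (induction N arbitrary: x)
  case (Suc N)
  then have "odd (int N + (x + 1) + y)" "odd (int N + (x - 1) + y)" by auto
  with Suc.IH show ?case by simp
qed auto

lemma walks_far: "int N < \<bar>x - y\<bar> \<Longrightarrow> walks K N x y = 0"
proof (induction N arbitrary: x)
  case (Suc N)
  then have "int N < \<bar>(x + 1) - y\<bar>" "int N < \<bar>(x - 1) - y\<bar>" by auto
  with Suc.IH show ?case by simp
qed auto

lemma walks_straight:
  assumes "0 \<le> x" "x \<le> int K" "0 \<le> y" "y \<le> int K" "\<bar>x - y\<bar> = int N"
  shows "walks K N x y = 1"
  using assms
proof (induction N arbitrary: x)
  case (Suc N)
  consider "y < x" "\<bar>(x - 1) - y\<bar> = int N" "int N < \<bar>(x + 1) - y\<bar>"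
    | "x < y" "\<bar>(x + 1) - y\<bar> = int N" "int N < \<bar>(x - 1) - y\<bar>"
    using Suc.prems(5) by linarith
  then show ?case
    by cases (use Suc in \<open>auto simp: walks_far\<close>)
qed auto

lemma walks_Suc_Suc_last:
  assumes "0 \<le> y" "y \<le> int K"
  shows "walks K (Suc (Suc N)) x y =
    (if y < int K then walks K N x (y + 2) + walks K N x y else 0)
    + (if 0 < y then walks K N x y + walks K N x (y - 2) else 0)"
  using assms by (simp only: walks_Suc_last) (auto simp: walks_end_outside algebra_simps)

lemma walks_Suc_Suc_0_0: "0 < K \<Longrightarrow> walks K (Suc (Suc N)) 0 0 = walks K N 1 1"
proof -
  assume "0 < K"
  then have "walks K (Suc (Suc N)) 0 0 = walks K (Suc N) 1 0 + walks K (Suc N) (-1) 0"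
    by simp
  also have "walks K (Suc N) (-1) 0 = 0" by (simp add: walks_start_outside)
  also have "walks K (Suc N) 1 0 = walks K N 1 1 + walks K N 1 (-1)"
    by (simp only: walks_Suc_last) simp
  also have "walks K N 1 (-1) = 0" by (simp add: walks_end_outside)
  finally show ?thesis by simp
qed

section \<open>Two-sided linear recurrences\<close>

lemma recurrence_vanishing_backwards:
  fixes \<delta> :: "int \<Rightarrow> 'a::idom" and a :: "nat \<Rightarrow> 'a"
  assumes rec: "\<And>z. (\<Sum>p\<le>d. a p * \<delta> (z + int p)) = 0" and a0: "a 0 \<noteq> 0"
    and nonneg: "\<And>z. 0 \<le> z \<Longrightarrow> \<delta> z = 0"
  shows "\<delta> z = 0"
proof -
  have "\<forall>z \<ge> - int t. \<delta> z = 0" for t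
  proof (induction t)
    case 0
    then show ?case using nonneg by simp
  next
    case (Suc t)
    show ?case
    proof (intro allI impI)
      fix z assume z: "- int (Suc t) \<le> z"
      have "(\<Sum>p\<le>d. a p * \<delta> (z + int p)) = a 0 * \<delta> z + (\<Sum>p\<in>{..d} - {0}. a p * \<delta> (z + int p))"
        by (subst sum.remove[of _ 0]) auto
      also have "(\<Sum>p\<in>{..d} - {0}. a p * \<delta> (z + int p)) = 0"
        using Suc.IH z by (intro sum.neutral) auto
      finally show "\<delta> z = 0" using rec a0 by simp
    qed
  qed
  from this[of "nat (- z)"] show ?thesis by (cases "0 \<le> z") (simp_all add: nonneg)
qed

lemma recurrence_unique:
  fixes f g :: "int \<Rightarrow> 'a::idom" and a b :: "nat \<Rightarrow> 'a"
  assumes f: "\<And>z. (\<Sum>p\<le>d. a p * f (z + int p)) = 0" and a0: "a 0 \<noteq> 0"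
    and g: "\<And>z. (\<Sum>q\<le>e. b q * g (z + int q)) = 0" and b0: "b 0 \<noteq> 0"
    and nonneg: "\<And>z. 0 \<le> z \<Longrightarrow> f z = g z"
  shows "f z = g z"
proof -
  \<comment> \<open>\<epsilon> satisfies the recurrence a (by a for f and b for g), hence vanishes;
    then f - g satisfies the recurrence b.\<close>
  define \<epsilon> where "\<epsilon> z = (\<Sum>q\<le>e. b q * (f (z + int q) - g (z + int q)))" for z
  have \<epsilon>_zero: "\<epsilon> z = 0" for z
  proof (rule recurrence_vanishing_backwards[where d = d and a = a])
    fix z
    have "(\<Sum>p\<le>d. a p * \<epsilon> (z + int p))
        = (\<Sum>p\<le>d. \<Sum>q\<le>e. a p * b q * f (z + int p + int q))
          - (\<Sum>p\<le>d. \<Sum>q\<le>e. a p * b q * g (z + int p + int q))"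
      by (simp add: \<epsilon>_def sum_distrib_left right_diff_distrib sum_subtractf mult.assoc add.assoc)
    also have "(\<Sum>p\<le>d. \<Sum>q\<le>e. a p * b q * f (z + int p + int q))
        = (\<Sum>q\<le>e. \<Sum>p\<le>d. b q * (a p * f (z + int q + int p)))"
      by (subst sum.swap) (intro sum.cong refl, simp add: algebra_simps)
    also have "\<dots> = (\<Sum>q\<le>e. b q * (\<Sum>p\<le>d. a p * f (z + int q + int p)))"
      by (simp add: sum_distrib_left)
    also have "(\<Sum>p\<le>d. \<Sum>q\<le>e. a p * b q * g (z + int p + int q))
        = (\<Sum>p\<le>d. a p * (\<Sum>q\<le>e. b q * g (z + int p + int q)))"
      by (simp add: sum_distrib_left mult.assoc)
    finally show "(\<Sum>p\<le>d. a p * \<epsilon> (z + int p)) = 0" using f g by simp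
  qed (use a0 nonneg in \<open>auto simp: \<epsilon>_def\<close>)
  have "f z - g z = 0"
    by (rule recurrence_vanishing_backwards[where d = e and a = b and \<delta> = "\<lambda>z. f z - g z"])
      (use \<epsilon>_zero b0 nonneg in \<open>simp_all add: \<epsilon>_def\<close>)
  then show ?thesis by simp
qed

lemma sum_atMost_reflect:
  "(\<Sum>i\<le>d. f i (N - int i)) = (\<Sum>p\<le>d. f (d - p) (N - int d + int p))"
proof -
  have "(\<Sum>i\<le>d. f i (N - int i)) = (\<Sum>p\<le>d. f (d - p) (N - int (d - p)))"
    using sum.atLeastAtMost_rev[of "\<lambda>i. f i (N - int i)" 0 d] by (simp add: atLeast0AtMost)
  also have "\<dots> = (\<Sum>p\<le>d. f (d - p) (N - int d + int p))"
    by (intro sum.cong) (auto simp: of_nat_diff algebra_simps)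
  finally show ?thesis .
qed

lemma sum_atMost_double_even:
  fixes g :: "nat \<Rightarrow> 'a::comm_monoid_add"
  assumes "\<And>j. odd j \<Longrightarrow> g j = 0"
  shows "(\<Sum>j\<le>2 * n. g j) = (\<Sum>p\<le>n. g (2 * p))"
proof (induction n)
  case (Suc n)
  have "(\<Sum>j\<le>2 * Suc n. g j) = (\<Sum>j\<le>2 * n. g j) + g (Suc (2 * n)) + g (2 * Suc n)"
    by (simp add: numeral_2_eq_2)
  then show ?case using Suc assms by simp
qed simp

lemma recurrence_reflected_poly:
  fixes c :: "int \<Rightarrow> 'a::idom" and a :: "nat \<Rightarrow> 'a"
  assumes rec: "\<And>z. (\<Sum>p\<le>d. a p * c (z + int p)) = 0" and a0: "a 0 \<noteq> 0" and ad: "a d \<noteq> 0"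
  obtains q where "poly q 0 \<noteq> 0" and "\<And>N. (\<Sum>i\<le>degree q. coeff q i * c (N - int i)) = 0"
proof
  define q where "q = (\<Sum>i\<le>d. monom (a (d - i)) i)"
  have coeff_q: "coeff q i = (if i \<le> d then a (d - i) else 0)" for i
    by (simp add: q_def coeff_sum coeff_monom sum.delta)
  have degree_q: "degree q = d"
    by (rule antisym) (auto intro: degree_le le_degree simp: coeff_q a0)
  show "poly q 0 \<noteq> 0"
    using ad by (simp add: poly_0_coeff_0 coeff_q)
  fix N
  have "(\<Sum>i\<le>degree q. coeff q i * c (N - int i))
      = (\<Sum>p\<le>d. coeff q (d - p) * c (N - int d + int p))"
    using sum_atMost_reflect[of "\<lambda>i x. coeff q i * c x"] by (simp add: degree_q)
  also have "\<dots> = (\<Sum>p\<le>d. a p * c (N - int d + int p))"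
    by (intro sum.cong) (auto simp: coeff_q)
  finally show "(\<Sum>i\<le>degree q. coeff q i * c (N - int i)) = 0" using rec by simp
qed

lemma C_eqI:
  fixes c :: "int \<Rightarrow> real" and a :: "nat \<Rightarrow> real"
  assumes nat: "\<And>N. c (int N) = real (C_nat K N)"
    and rec: "\<And>z. (\<Sum>p\<le>d. a p * c (z + int p)) = 0" and a0: "a 0 \<noteq> 0" and ad: "a d \<noteq> 0"
  shows "C K = c"
  unfolding C_def
proof (rule the_equality)
  show "(\<forall>N. c (int N) = real (C_nat K N)) \<and>
      (\<exists>q. poly q 0 \<noteq> 0 \<and> (\<forall>N. (\<Sum>i\<le>degree q. coeff q i * c (N - int i)) = 0))"
    using nat recurrence_reflected_poly[OF rec a0 ad] by blast
next
  fix c' :: "int \<Rightarrow> real"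
  assume "(\<forall>N. c' (int N) = real (C_nat K N)) \<and>
      (\<exists>q. poly q 0 \<noteq> 0 \<and> (\<forall>N. (\<Sum>i\<le>degree q. coeff q i * c' (N - int i)) = 0))"
  then obtain q where nat': "\<And>N. c' (int N) = real (C_nat K N)" and "poly q 0 \<noteq> 0"
    and rec': "\<And>N. (\<Sum>i\<le>degree q. coeff q i * c' (N - int i)) = 0"
    by blast
  then have "q \<noteq> 0" by auto
  show "c' = c"
  proof
    fix z
    show "c' z = c z"
    proof (rule recurrence_unique[where d = "degree q" and a = "\<lambda>p. coeff q (degree q - p)"
          and e = d and b = a])
      show "(\<Sum>p\<le>degree q. coeff q (degree q - p) * c' (z + int p)) = 0" for z
        using rec'[of "z + int (degree q)"] sum_atMost_reflect[of "\<lambda>i x. coeff q i * c' x"]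
        by simp
      show "c' z = c z" if "0 \<le> z" for z
        using that nat nat' by (metis nonneg_eq_int)
    qed (use \<open>q \<noteq> 0\<close> rec a0 in auto)
  qed
qed

section \<open>Inverses and integer powers of matrices\<close>

definition mat_inv :: "'a::field mat \<Rightarrow> 'a mat" where
  "mat_inv A = inverse (det A) \<cdot>\<^sub>m adj_mat A"

lemma dim_mat_inv [simp]: "dim_row (mat_inv A) = dim_row A" "dim_col (mat_inv A) = dim_col A"
  by (simp_all add: mat_inv_def adj_mat_def)

lemma mat_inv_carrier [simp]: "A \<in> carrier_mat n n \<Longrightarrow> mat_inv A \<in> carrier_mat n n"
  by (simp add: mat_inv_def adj_mat(1))

lemma mat_inv_mult:
  fixes A :: "'a::field mat"
  assumes A: "A \<in> carrier_mat n n" and "det A \<noteq> 0"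
  shows "mat_inv A * A = 1\<^sub>m n" and "A * mat_inv A = 1\<^sub>m n"
proof -
  have "mat_inv A * A = inverse (det A) \<cdot>\<^sub>m (det A \<cdot>\<^sub>m 1\<^sub>m n)"
    using A by (simp add: mat_inv_def mult_smult_assoc_mat[of _ n n] adj_mat)
  also have "\<dots> = 1\<^sub>m n" using \<open>det A \<noteq> 0\<close> by (intro eq_matI) auto
  finally show "mat_inv A * A = 1\<^sub>m n" .
  have "A * mat_inv A = inverse (det A) \<cdot>\<^sub>m (det A \<cdot>\<^sub>m 1\<^sub>m n)"
    using A by (simp add: mat_inv_def mult_smult_distrib[OF A adj_mat(1)[OF A]] adj_mat)
  also have "\<dots> = 1\<^sub>m n" using \<open>det A \<noteq> 0\<close> by (intro eq_matI) auto
  finally show "A * mat_inv A = 1\<^sub>m n" .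
qed

lemma det_mat_inv: "A \<in> carrier_mat n n \<Longrightarrow> det A \<noteq> 0 \<Longrightarrow> det (mat_inv A) = inverse (det A)"
  using det_mult[of "mat_inv A" n A] mat_inv_mult(1)[of A n] by (simp add: field_simps)

lemma pow_mat_add: "A \<in> carrier_mat n n \<Longrightarrow> A ^\<^sub>m (k + l) = A ^\<^sub>m k * A ^\<^sub>m l"
  by (induction l) (auto simp: assoc_mult_mat[of _ n n _ n _ n])

lemma pow_mat_commute: "A \<in> carrier_mat n n \<Longrightarrow> A ^\<^sub>m k * A ^\<^sub>m l = A ^\<^sub>m l * A ^\<^sub>m k"
  by (metis pow_mat_add add.commute)

lemma det_pow_mat: "A \<in> carrier_mat n n \<Longrightarrow> det (A ^\<^sub>m k) = det A ^ k"
  by (induction k) (auto simp: det_mult[of _ n])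

definition mat_int_pow :: "'a::field mat \<Rightarrow> int \<Rightarrow> 'a mat" where
  "mat_int_pow A z = (if 0 \<le> z then A ^\<^sub>m nat z else mat_inv A ^\<^sub>m nat (- z))"

lemma mat_int_pow_carrier [simp]: "A \<in> carrier_mat n n \<Longrightarrow> mat_int_pow A z \<in> carrier_mat n n"
  by (simp add: mat_int_pow_def)

lemma mat_int_pow_of_nat [simp]: "mat_int_pow A (int k) = A ^\<^sub>m k"
  by (simp add: mat_int_pow_def)

lemma det_mat_int_pow:
  "A \<in> carrier_mat n n \<Longrightarrow> det A \<noteq> 0 \<Longrightarrow> det (mat_int_pow A z) = det A powi z"
  by (simp add: mat_int_pow_def power_int_def det_pow_mat[of _ n] det_mat_inv)

context
  fixes A :: "'a::field mat" and n :: nat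
  assumes A: "A \<in> carrier_mat n n" and det_A: "det A \<noteq> 0"
begin

lemma mat_int_pow_neg: "mat_int_pow A (- int k) = mat_inv A ^\<^sub>m k"
  using A by (cases k) (auto simp: mat_int_pow_def nat_add_distrib)

lemma mat_int_pow_plus_one: "mat_int_pow A (z + 1) = mat_int_pow A z * A"
proof (cases "0 \<le> z")
  case True
  then show ?thesis by (simp add: mat_int_pow_def nat_add_distrib)
next
  case False
  define k where "k = nat (- z - 1)"
  with False have z: "z = - int (Suc k)" by simp
  then have "z + 1 = - int k" by simp
  then have "mat_int_pow A (z + 1) = mat_inv A ^\<^sub>m k * (mat_inv A * A)"
    using A det_A by (simp add: mat_int_pow_neg mat_inv_mult)
  also have "\<dots> = mat_int_pow A z * A"
    using A unfolding z mat_int_pow_neg by (simp add: assoc_mult_mat[of _ n n _ n _ n])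
  finally show ?thesis .
qed

lemma mat_int_pow_minus_one: "mat_int_pow A (z - 1) = mat_int_pow A z * mat_inv A"
proof -
  have "mat_int_pow A (z - 1) = mat_int_pow A (z - 1) * (A * mat_inv A)"
    using A det_A by (simp add: mat_inv_mult right_mult_one_mat[OF mat_int_pow_carrier[OF A]])
  also have "\<dots> = mat_int_pow A z * mat_inv A"
    using A mat_int_pow_plus_one[of "z - 1"] by (simp add: assoc_mult_mat[of _ n n _ n _ n])
  finally show ?thesis .
qed

lemma mat_int_pow_add: "mat_int_pow A (z + w) = mat_int_pow A z * mat_int_pow A w"
proof (induction w rule: int_induct[where k = 0])
  case base
  then show ?case using A by (simp add: mat_int_pow_def right_mult_one_mat[OF mat_int_pow_carrier[OF A]])
next
  case (step1 w)
  have "mat_int_pow A (z + (w + 1)) = mat_int_pow A (z + w) * A"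
    using mat_int_pow_plus_one[of "z + w"] by (simp add: add.assoc)
  also have "\<dots> = mat_int_pow A z * (mat_int_pow A w * A)"
    using A step1.IH by (simp add: assoc_mult_mat[of _ n n _ n _ n])
  also have "\<dots> = mat_int_pow A z * mat_int_pow A (w + 1)"
    by (simp only: mat_int_pow_plus_one)
  finally show ?case .
next
  case (step2 w)
  have "mat_int_pow A (z + (w - 1)) = mat_int_pow A (z + w) * mat_inv A"
    using mat_int_pow_minus_one[of "z + w"] by (simp add: add_diff_eq)
  also have "\<dots> = mat_int_pow A z * (mat_int_pow A w * mat_inv A)"
    using A step2.IH by (simp add: assoc_mult_mat[of _ n n _ n _ n])
  also have "\<dots> = mat_int_pow A z * mat_int_pow A (w - 1)"
    by (simp only: mat_int_pow_minus_one)
  finally show ?case .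
qed

end

section \<open>Cyclic vectors and recurrences for matrix powers\<close>

definition mat_lincomb :: "nat \<Rightarrow> (nat \<Rightarrow> 'a::comm_semiring_1) \<Rightarrow> (nat \<Rightarrow> 'a mat) \<Rightarrow> nat set \<Rightarrow> 'a mat"
  where "mat_lincomb n c F S = mat n n (\<lambda>ij. \<Sum>p\<in>S. c p * F p $$ ij)"

lemma mult_mat_lincomb:
  assumes M: "M \<in> carrier_mat n n" and F: "\<And>p. p \<in> S \<Longrightarrow> F p \<in> carrier_mat n n"
  shows "M * mat_lincomb n c F S = mat_lincomb n c (\<lambda>p. M * F p) S"
proof (rule eq_matI)
  fix i j assume "i < dim_row (mat_lincomb n c (\<lambda>p. M * F p) S)"
    "j < dim_col (mat_lincomb n c (\<lambda>p. M * F p) S)"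
  then have i: "i < n" and j: "j < n" by (auto simp: mat_lincomb_def)
  have "(M * mat_lincomb n c F S) $$ (i, j) = (\<Sum>l\<in>{0..<n}. M $$ (i, l) * (\<Sum>p\<in>S. c p * F p $$ (l, j)))"
    using i j M by (simp add: mat_lincomb_def scalar_prod_def)
  also have "\<dots> = (\<Sum>p\<in>S. c p * (\<Sum>l\<in>{0..<n}. M $$ (i, l) * F p $$ (l, j)))"
    by (simp add: sum_distrib_left sum.swap[of _ S] mult.left_commute)
  also have "\<dots> = mat_lincomb n c (\<lambda>p. M * F p) S $$ (i, j)"
  proof -
    have "(M * F p) $$ (i, j) = (\<Sum>l\<in>{0..<n}. M $$ (i, l) * F p $$ (l, j))" if "p \<in> S" for p
      using i j M F[OF that] by (simp add: scalar_prod_def)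
    then show ?thesis using i j by (simp add: mat_lincomb_def)
  qed
  finally show "(M * mat_lincomb n c F S) $$ (i, j) = mat_lincomb n c (\<lambda>p. M * F p) S $$ (i, j)" .
qed (use M in \<open>auto simp: mat_lincomb_def\<close>)

lemma mat_lincomb_mult:
  assumes M: "M \<in> carrier_mat n n" and F: "\<And>p. p \<in> S \<Longrightarrow> F p \<in> carrier_mat n n"
  shows "mat_lincomb n c F S * M = mat_lincomb n c (\<lambda>p. F p * M) S"
proof (rule eq_matI)
  fix i j assume "i < dim_row (mat_lincomb n c (\<lambda>p. F p * M) S)"
    "j < dim_col (mat_lincomb n c (\<lambda>p. F p * M) S)"
  then have i: "i < n" and j: "j < n" by (auto simp: mat_lincomb_def)
  have "(mat_lincomb n c F S * M) $$ (i, j) = (\<Sum>l\<in>{0..<n}. (\<Sum>p\<in>S. c p * F p $$ (i, l)) * M $$ (l, j))"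
    using i j M by (simp add: mat_lincomb_def scalar_prod_def)
  also have "\<dots> = (\<Sum>p\<in>S. c p * (\<Sum>l\<in>{0..<n}. F p $$ (i, l) * M $$ (l, j)))"
    by (simp add: sum_distrib_left sum_distrib_right sum.swap[of _ S] mult.assoc)
  also have "\<dots> = mat_lincomb n c (\<lambda>p. F p * M) S $$ (i, j)"
  proof -
    have "(F p * M) $$ (i, j) = (\<Sum>l\<in>{0..<n}. F p $$ (i, l) * M $$ (l, j))" if "p \<in> S" for p
      using i j M F[OF that] by (simp add: scalar_prod_def)
    then show ?thesis using i j by (simp add: mat_lincomb_def)
  qed
  finally show "(mat_lincomb n c F S * M) $$ (i, j) = mat_lincomb n c (\<lambda>p. F p * M) S $$ (i, j)" .
qed (use M in \<open>auto simp: mat_lincomb_def\<close>)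

definition krylov_mat :: "'a::semiring_1 mat \<Rightarrow> 'a mat" where
  "krylov_mat A = mat (dim_row A) (dim_row A) (\<lambda>(i, j). (A ^\<^sub>m j) $$ (i, 0))"

lemma zero_if_mult_nonsingular_right:
  fixes U :: "'a::field mat"
  assumes L: "L \<in> carrier_mat m n" and U: "U \<in> carrier_mat n n" "det U \<noteq> 0"
    and LU: "L * U = 0\<^sub>m m n"
  shows "L = 0\<^sub>m m n"
proof -
  have "L = L * (U * mat_inv U)" using L U by (simp add: mat_inv_mult)
  also have "\<dots> = (L * U) * mat_inv U"
    using assoc_mult_mat[OF L U(1) mat_inv_carrier[OF U(1)]] by simp
  also have "\<dots> = 0\<^sub>m m n" using LU U by simp
  finally show ?thesis .
qed

lemma zero_if_nonsingular_mult_left: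
  fixes U :: "'a::field mat"
  assumes U: "U \<in> carrier_mat n n" "det U \<noteq> 0" and Y: "Y \<in> carrier_mat n m"
    and UY: "U * Y = 0\<^sub>m n m"
  shows "Y = 0\<^sub>m n m"
proof -
  have "Y = (mat_inv U * U) * Y" using U Y by (simp add: mat_inv_mult)
  also have "\<dots> = mat_inv U * (U * Y)"
    using assoc_mult_mat[OF mat_inv_carrier[OF U(1)] U(1) Y] .
  also have "\<dots> = 0\<^sub>m n m" using UY U by simp
  finally show ?thesis .
qed

lemma cyclic_mat_lincomb_pow_zero:
  fixes A :: "'a::field mat"
  assumes A: "A \<in> carrier_mat n n" and n: "0 < n" and U: "det (krylov_mat A) \<noteq> 0"
    and col0: "\<And>l. l < n \<Longrightarrow> mat_lincomb n c (\<lambda>p. A ^\<^sub>m p) S $$ (l, 0) = 0"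
  shows "mat_lincomb n c (\<lambda>p. A ^\<^sub>m p) S = 0\<^sub>m n n"
proof (rule zero_if_mult_nonsingular_right[OF _ _ U])
  let ?L = "mat_lincomb n c (\<lambda>p. A ^\<^sub>m p) S"
  have L: "?L \<in> carrier_mat n n" by (simp add: mat_lincomb_def)
  then show "?L \<in> carrier_mat n n" .
  show U_carrier: "krylov_mat A \<in> carrier_mat n n" using A by (simp add: krylov_mat_def)
  show "?L * krylov_mat A = 0\<^sub>m n n"
  proof (rule eq_matI)
    fix l j assume "l < dim_row (0\<^sub>m n n :: 'a mat)" "j < dim_col (0\<^sub>m n n :: 'a mat)"
    then have l: "l < n" and j: "j < n" by auto
    have "(?L * krylov_mat A) $$ (l, j) = (?L * A ^\<^sub>m j) $$ (l, 0)"
      using l j n A L by (simp add: krylov_mat_def scalar_prod_def)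
    also have "?L * A ^\<^sub>m j = A ^\<^sub>m j * ?L"
      using A by (simp add: mat_lincomb_mult mult_mat_lincomb pow_mat_commute[of _ n])
    also have "(A ^\<^sub>m j * ?L) $$ (l, 0) = 0"
      using l n A L col0 by (simp add: scalar_prod_def)
    finally show "(?L * krylov_mat A) $$ (l, j) = 0\<^sub>m n n $$ (l, j)" using l j by simp
  qed (use L U_carrier in auto)
qed

lemma krylov_annihilator:
  fixes A :: "'a::field mat"
  assumes A: "A \<in> carrier_mat n n" and n: "0 < n" and U: "det (krylov_mat A) \<noteq> 0"
  obtains c where "c n = 1" and "mat_lincomb n c (\<lambda>p. A ^\<^sub>m p) {..n} = 0\<^sub>m n n"
proof -
  let ?U = "krylov_mat A"
  have U_carrier: "?U \<in> carrier_mat n n" using A by (simp add: krylov_mat_def)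
  define V where "V = mat n 1 (\<lambda>(l, _). (A ^\<^sub>m n) $$ (l, 0))"
  have V: "V \<in> carrier_mat n 1" by (simp add: V_def)
  define c where "c p = (if p = n then 1 else - (mat_inv ?U * V) $$ (p, 0))" for p
  have "mat_lincomb n c (\<lambda>p. A ^\<^sub>m p) {..n} $$ (l, 0) = 0" if l: "l < n" for l
  proof -
    have "?U * (mat_inv ?U * V) = V"
      using U_carrier V U by (simp add: assoc_mult_mat[symmetric, of _ n n _ n _ 1] mat_inv_mult)
    then have "(?U * (mat_inv ?U * V)) $$ (l, 0) = V $$ (l, 0)" by simp
    then have "(\<Sum>p<n. c p * (A ^\<^sub>m p) $$ (l, 0)) = - (A ^\<^sub>m n) $$ (l, 0)"
      using l U_carrier V A
      by (simp add: scalar_prod_def V_def krylov_mat_def atLeast0LessThan c_def sum_negf mult.commute)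
    then show ?thesis
      using l n by (simp add: mat_lincomb_def c_def lessThan_Suc_atMost[symmetric])
  qed
  then have "mat_lincomb n c (\<lambda>p. A ^\<^sub>m p) {..n} = 0\<^sub>m n n"
    by (rule cyclic_mat_lincomb_pow_zero[OF A n U])
  then show thesis by (intro that[of c]) (simp_all add: c_def)
qed

lemma mat_lincomb_int_pow:
  fixes A :: "'a::field mat"
  assumes A: "A \<in> carrier_mat n n" and det_A: "det A \<noteq> 0"
  shows "mat_lincomb n c (\<lambda>p. mat_int_pow A (z + int p)) S
    = mat_int_pow A z * mat_lincomb n c (\<lambda>p. A ^\<^sub>m p) S"
  using A by (simp add: mult_mat_lincomb mat_int_pow_add[OF A det_A])

lemma krylov_annihilator_constant_coeff:
  fixes A :: "'a::field mat"
  assumes A: "A \<in> carrier_mat n n" and det_A: "det A \<noteq> 0" and n: "0 < n"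
    and U: "det (krylov_mat A) \<noteq> 0"
    and cn: "c n = 1" and ann: "mat_lincomb n c (\<lambda>p. A ^\<^sub>m p) {..n} = 0\<^sub>m n n"
  shows "c 0 \<noteq> 0"
proof
  assume c0: "c 0 = 0"
  let ?U = "krylov_mat A"
  have U_carrier: "?U \<in> carrier_mat n n" using A by (simp add: krylov_mat_def)
  define Y where "Y = mat n 1 (\<lambda>(p, _). c (Suc p))"
  have Y: "Y \<in> carrier_mat n 1" by (simp add: Y_def)
  \<comment> \<open>Shifted by -1, the recurrence becomes a vanishing combination of the columns of ?U
    whose last coefficient is c n = 1.\<close>
  have "?U * Y = 0\<^sub>m n 1"
  proof (rule eq_matI)
    fix l j assume "l < dim_row (0\<^sub>m n 1 :: 'a mat)" "j < dim_col (0\<^sub>m n 1 :: 'a mat)"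
    then have l: "l < n" and j: "j = 0" by auto
    have "mat_lincomb n c (\<lambda>p. mat_int_pow A (- 1 + int p)) {..n} = 0\<^sub>m n n"
      unfolding mat_lincomb_int_pow[OF A det_A] ann
      using right_mult_zero_mat[OF mat_int_pow_carrier[OF A]] by simp
    then have "(\<Sum>p\<le>n. c p * mat_int_pow A (- 1 + int p) $$ (l, 0)) = 0"
      using l n by (auto simp: mat_lincomb_def dest: arg_cong[where f = "\<lambda>M. M $$ (l, 0)"])
    moreover obtain m where m: "n = Suc m" using n by (cases n) auto
    ultimately have "(\<Sum>p\<le>m. c (Suc p) * (A ^\<^sub>m p) $$ (l, 0)) = 0"
      using c0 unfolding m sum.atMost_Suc_shift by simp
    then show "(?U * Y) $$ (l, j) = 0\<^sub>m n 1 $$ (l, j)"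
      using l j A m by (simp add: krylov_mat_def Y_def scalar_prod_def atLeast0LessThan
          lessThan_Suc_atMost mult.commute)
  qed (use U_carrier Y in auto)
  then have "Y = 0\<^sub>m n 1" by (rule zero_if_nonsingular_mult_left[OF U_carrier U Y])
  then have "Y $$ (n - 1, 0) = 0" using n by simp
  then show False using n cn by (simp add: Y_def)
qed

lemma cyclic_int_pow_recurrence:
  fixes A :: "'a::field mat"
  assumes A: "A \<in> carrier_mat n n" and det_A: "det A \<noteq> 0" and n: "0 < n"
    and U: "det (krylov_mat A) \<noteq> 0"
  obtains c where "c n = 1" and "c 0 \<noteq> 0"
    and "\<And>z i j. i < n \<Longrightarrow> j < n \<Longrightarrow> (\<Sum>p\<le>n. c p * mat_int_pow A (z + int p) $$ (i, j)) = 0"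
proof -
  obtain c where cn: "c n = 1" and ann: "mat_lincomb n c (\<lambda>p. A ^\<^sub>m p) {..n} = 0\<^sub>m n n"
    using krylov_annihilator[OF A n U] by blast
  have "(\<Sum>p\<le>n. c p * mat_int_pow A (z + int p) $$ (i, j)) = 0" if "i < n" "j < n" for z i j
  proof -
    have "mat_lincomb n c (\<lambda>p. mat_int_pow A (z + int p)) {..n} = 0\<^sub>m n n"
      unfolding mat_lincomb_int_pow[OF A det_A] ann
      using right_mult_zero_mat[OF mat_int_pow_carrier[OF A]] by simp
    then show ?thesis
      using that by (auto simp: mat_lincomb_def dest: arg_cong[where f = "\<lambda>M. M $$ (i, j)"])
  qed
  with cn krylov_annihilator_constant_coeff[OF A det_A n U cn ann] show thesis by (rule that)
qed

lemma det_unit_upper_triangular: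
  assumes A: "A \<in> carrier_mat n n"
    and below: "\<And>i j. j < i \<Longrightarrow> i < n \<Longrightarrow> A $$ (i, j) = 0" and diag: "\<And>i. i < n \<Longrightarrow> A $$ (i, i) = 1"
  shows "det A = 1"
proof -
  have "upper_triangular A" using A below by (auto simp: upper_triangular_def)
  then have "det A = prod_list (diag_mat A)" using A by (rule det_upper_triangular)
  also have "\<dots> = 1" using A diag by (simp add: prod_list_diag_prod)
  finally show ?thesis .
qed

lemma det_unit_lower_triangular:
  assumes A: "A \<in> carrier_mat n n"
    and above: "\<And>i j. i < j \<Longrightarrow> j < n \<Longrightarrow> A $$ (i, j) = 0" and diag: "\<And>i. i < n \<Longrightarrow> A $$ (i, i) = 1"
  shows "det A = 1"
proof -
  have "det A = prod_list (diag_mat A)" using above A by (rule det_lower_triangular)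
  also have "\<dots> = 1" using A diag by (simp add: prod_list_diag_prod)
  finally show ?thesis .
qed

lemma det_block_upper_right_zero:
  fixes M :: "'a::idom mat"
  assumes M: "M \<in> carrier_mat (k + m) (k + m)"
    and zero: "\<And>i j. i < k \<Longrightarrow> k \<le> j \<Longrightarrow> j < k + m \<Longrightarrow> M $$ (i, j) = 0"
  shows "det M = det (mat k k (\<lambda>(i, j). M $$ (i, j))) * det (mat m m (\<lambda>(i, j). M $$ (k + i, k + j)))"
proof -
  have "M = four_block_mat (mat k k (\<lambda>(i, j). M $$ (i, j))) (0\<^sub>m k m)
      (mat m k (\<lambda>(i, j). M $$ (k + i, j))) (mat m m (\<lambda>(i, j). M $$ (k + i, k + j)))"
    by (rule eq_matI) (use M zero in auto)
  then show ?thesis by (metis det_four_block_mat_upper_right_zero mat_carrier zero_carrier_mat)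
qed

lemma det_block_lower_left_zero:
  fixes M :: "'a::idom mat"
  assumes M: "M \<in> carrier_mat (k + m) (k + m)"
    and zero: "\<And>i j. k \<le> i \<Longrightarrow> i < k + m \<Longrightarrow> j < k \<Longrightarrow> M $$ (i, j) = 0"
  shows "det M = det (mat k k (\<lambda>(i, j). M $$ (i, j))) * det (mat m m (\<lambda>(i, j). M $$ (k + i, k + j)))"
proof -
  have "M = four_block_mat (mat k k (\<lambda>(i, j). M $$ (i, j))) (mat k m (\<lambda>(i, j). M $$ (i, k + j)))
      (0\<^sub>m m k) (mat m m (\<lambda>(i, j). M $$ (k + i, k + j)))"
    by (rule eq_matI) (use M zero in auto)
  then show ?thesis by (metis det_four_block_mat_lower_left_zero mat_carrier zero_carrier_mat)
qed

lemma det_selected_entries_of_products: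
  fixes M :: "'a::comm_ring_1 mat"
  assumes M: "M \<in> carrier_mat n n"
    and X: "\<And>j. j < n \<Longrightarrow> X j \<in> carrier_mat n n" and Y: "\<And>j. j < n \<Longrightarrow> Y j \<in> carrier_mat n n"
    and v: "\<And>j. j < n \<Longrightarrow> v j < n" and v': "\<And>j. j < n \<Longrightarrow> v' j < n"
  shows "det (mat n n (\<lambda>(j, j'). (X j * M * Y j') $$ (v j, v' j')))
    = det M * det (mat n n (\<lambda>(j, j'). (X j * Y j') $$ (v j, v' j')))"
proof -
  define R where "R = mat n n (\<lambda>(j, i). X j $$ (v j, i))"
  define S where "S = mat n n (\<lambda>(i, j'). Y j' $$ (i, v' j'))"
  have R: "R \<in> carrier_mat n n" and S: "S \<in> carrier_mat n n" by (simp_all add: R_def S_def)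
  have factor: "mat n n (\<lambda>(j, j'). (X j * N * Y j') $$ (v j, v' j')) = R * N * S"
    if N: "N \<in> carrier_mat n n" for N
  proof -
    have RN: "R * N = mat n n (\<lambda>(j, l). (X j * N) $$ (v j, l))"
    proof (rule eq_matI)
      fix j l assume "j < dim_row (mat n n (\<lambda>(j, l). (X j * N) $$ (v j, l)))"
        "l < dim_col (mat n n (\<lambda>(j, l). (X j * N) $$ (v j, l)))"
      then have j: "j < n" and l: "l < n" by auto
      show "(R * N) $$ (j, l) = mat n n (\<lambda>(j, l). (X j * N) $$ (v j, l)) $$ (j, l)"
        using X[OF j] v[OF j] N j l by (simp add: R_def scalar_prod_def)
    qed (use N in \<open>simp_all add: R_def\<close>)
    show ?thesis
    proof (rule eq_matI)
      fix j j' assume "j < dim_row (R * N * S)" "j' < dim_col (R * N * S)"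
      then have j: "j < n" and j': "j' < n" using N by (auto simp: R_def S_def)
      show "mat n n (\<lambda>(j, j'). (X j * N * Y j') $$ (v j, v' j')) $$ (j, j') = (R * N * S) $$ (j, j')"
        unfolding RN using X[OF j] Y[OF j'] v[OF j] v'[OF j'] N j j' by (simp add: S_def scalar_prod_def del: assoc_mult_mat)
    qed (use N in \<open>simp_all add: R_def S_def\<close>)
  qed
  have "R * S = mat n n (\<lambda>(j, j'). (X j * Y j') $$ (v j, v' j'))"
  proof -
    have "R * S = mat n n (\<lambda>(j, j'). (X j * 1\<^sub>m n * Y j') $$ (v j, v' j'))"
      using factor[of "1\<^sub>m n"] R by simp
    also have "\<dots> = mat n n (\<lambda>(j, j'). (X j * Y j') $$ (v j, v' j'))"
      by (intro cong_mat) (simp_all add: right_mult_one_mat[OF X])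
    finally show ?thesis .
  qed
  moreover have "det (R * M * S) = det M * det (R * S)"
    using R S M by (simp add: det_mult[of _ n] mult_ac)
  ultimately show ?thesis by (simp add: factor[OF M])
qed

section \<open>The two-step transfer matrix of a strip of odd width\<close>

locale strip =
  fixes h :: nat
  assumes h_pos: "0 < h"
begin

definition K :: nat where "K = 2 * h - 1"

lemma int_K: "int K = 2 * int h - 1"
  using h_pos by (simp add: K_def of_nat_diff)

text \<open>B $$ (i, j) counts two-step walks from height 2i to height 2j; D $$ (i, j) counts single
  steps from the even height 2j to the odd height 2i + 1.\<close>

definition B :: "real mat" where
  "B = mat h h (\<lambda>(i, j). if i = j then (if i = 0 then 1 else 2) else if i = Suc j \<or> j = Suc i then 1 else 0)"

definition D :: "real mat" where
  "D = mat h h (\<lambda>(i, j). if j = i \<or> j = Suc i then 1 else 0)"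

lemma B_carrier [simp]: "B \<in> carrier_mat h h"
  by (simp add: B_def)

lemma dim_B [simp]: "dim_row B = h" "dim_col B = h"
  by (simp_all add: B_def)

lemma sum_mult_B_col:
  assumes j: "j < h"
  shows "(\<Sum>t\<in>{0..<h}. f t * B $$ (t, j)) =
    (if Suc j < h then f (Suc j) else 0) + (if j = 0 then 1 else 2) * f j + (if 0 < j then f (j - 1) else 0)"
proof -
  have "(\<Sum>t\<in>{0..<h}. f t * B $$ (t, j)) = (\<Sum>t\<in>{0..<h}.
      (if t = Suc j then f t else 0) + (if t = j then (if j = 0 then 1 else 2) * f t else 0)
      + (if Suc t = j then f t else 0))"
    using j by (intro sum.cong) (auto simp: B_def)
  also have "\<dots> = (if Suc j < h then f (Suc j) else 0) + (if j = 0 then 1 else 2) * f j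
      + (\<Sum>t\<in>{0..<h}. if Suc t = j then f t else 0)"
    using j by (simp add: sum.distrib)
  also have "(\<Sum>t\<in>{0..<h}. if Suc t = j then f t else 0) = (if 0 < j then f (j - 1) else 0)"
    using j by (cases j) simp_all
  finally show ?thesis .
qed

lemma B_pow_eq_walks:
  "i < h \<Longrightarrow> j < h \<Longrightarrow> (B ^\<^sub>m N) $$ (i, j) = real (walks K (2 * N) (2 * int i) (2 * int j))"
proof (induction N arbitrary: j)
  case 0
  then show ?case by (simp add: int_K)
next
  case (Suc N)
  have "(B ^\<^sub>m Suc N) $$ (i, j) = (\<Sum>t\<in>{0..<h}. (B ^\<^sub>m N) $$ (i, t) * B $$ (t, j))"
    using Suc.prems by (simp add: scalar_prod_def)
  also have "\<dots> = (\<Sum>t\<in>{0..<h}. real (walks K (2 * N) (2 * int i) (2 * int t)) * B $$ (t, j))"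
    using Suc by (intro sum.cong) auto
  also have "\<dots> = real (walks K (2 * Suc N) (2 * int i) (2 * int j))"
  proof -
    have two_steps: "walks K (2 * Suc N) (2 * int i) (2 * int j) =
      (if 2 * int j < int K then walks K (2 * N) (2 * int i) (2 * int j + 2) + walks K (2 * N) (2 * int i) (2 * int j) else 0)
      + (if 0 < 2 * int j then walks K (2 * N) (2 * int i) (2 * int j) + walks K (2 * N) (2 * int i) (2 * int j - 2) else 0)"
      using walks_Suc_Suc_last[of "2 * int j" K "2 * N" "2 * int i"] Suc.prems
      by (simp add: int_K del: walks.simps)
    show ?thesis
      using Suc.prems unfolding sum_mult_B_col[OF Suc.prems(2)] two_steps
      by (auto simp: int_K algebra_simps of_nat_diff walks_end_outside simp del: walks.simps)
  qed
  finally show ?case .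
qed

lemma B_pow_far:
  "i < h \<Longrightarrow> j < h \<Longrightarrow> int N < \<bar>int i - int j\<bar> \<Longrightarrow> (B ^\<^sub>m N) $$ (i, j) = 0"
  by (simp add: B_pow_eq_walks walks_far)

lemma B_pow_straight:
  assumes "i < h" "j < h" "int N = \<bar>int i - int j\<bar>"
  shows "(B ^\<^sub>m N) $$ (i, j) = 1"
proof -
  have "walks K (2 * N) (2 * int i) (2 * int j) = 1"
    using assms by (intro walks_straight) (auto simp: int_K abs_if)
  then show ?thesis using assms by (simp add: B_pow_eq_walks)
qed

lemma B_eq_transpose_D_mult_D: "transpose_mat D * D = B"
proof (rule eq_matI)
  fix i j assume "i < dim_row B" "j < dim_col B"
  then have i: "i < h" and j: "j < h" by auto
  have "(transpose_mat D * D) $$ (i, j) = (\<Sum>l\<in>{0..<h}. D $$ (l, i) * D $$ (l, j))"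
    using i j by (simp add: D_def scalar_prod_def)
  also have "\<dots> = (\<Sum>l\<in>{0..<h}. (if l = j then D $$ (j, i) else 0)
      + (if Suc l = j then D $$ (l, i) else 0))"
    using j by (intro sum.cong) (auto simp: D_def)
  also have "\<dots> = D $$ (j, i) + (if 0 < j then D $$ (j - 1, i) else 0)"
    using j by (cases j) (simp_all add: sum.distrib)
  also have "\<dots> = B $$ (i, j)"
    using i j by (auto simp: D_def B_def)
  finally show "(transpose_mat D * D) $$ (i, j) = B $$ (i, j)" .
qed (simp_all add: D_def)

lemma det_B: "det B = 1"
proof -
  have D: "D \<in> carrier_mat h h" by (simp add: D_def)
  moreover have "det D = 1"
    by (rule det_unit_upper_triangular[OF D]) (auto simp: D_def)
  ultimately show ?thesis
    by (simp add: B_eq_transpose_D_mult_D[symmetric] det_mult[of _ h] det_transpose)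
qed

lemma det_krylov_B: "det (krylov_mat B) = 1"
  by (rule det_unit_upper_triangular[of _ h]) (auto simp: krylov_mat_def B_pow_far B_pow_straight)

lemma B_int_pow_recurrence:
  obtains c where "c h = 1" and "c 0 \<noteq> 0"
    and "\<And>z i j. i < h \<Longrightarrow> j < h \<Longrightarrow> (\<Sum>p\<le>h. c p * mat_int_pow B (z + int p) $$ (i, j)) = 0"
  using cyclic_int_pow_recurrence[OF B_carrier _ h_pos] det_B det_krylov_B by auto

definition corner :: "int \<Rightarrow> real" where
  "corner z = mat_int_pow B z $$ (0, 0)"

lemma corner_of_nat: "corner (int N) = real (walks K (2 * N) 0 0)"
  using h_pos by (simp add: corner_def B_pow_eq_walks)

lemma B_int_pow_last_entry: "mat_int_pow B z $$ (h - 1, h - 1) = corner (z + 1)"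
proof -
  obtain c where "c h = 1" and c0: "c 0 \<noteq> 0"
    and rec: "\<And>z i j. i < h \<Longrightarrow> j < h \<Longrightarrow> (\<Sum>p\<le>h. c p * mat_int_pow B (z + int p) $$ (i, j)) = 0"
    using B_int_pow_recurrence by blast
  show ?thesis
  proof (rule recurrence_unique[where d = h and a = c and e = h and b = c
        and f = "\<lambda>z. mat_int_pow B z $$ (h - 1, h - 1)" and g = "\<lambda>z. corner (z + 1)"])
    show "(\<Sum>p\<le>h. c p * mat_int_pow B (z + int p) $$ (h - 1, h - 1)) = 0" for z
      using rec h_pos by simp
    show "(\<Sum>p\<le>h. c p * corner (z + int p + 1)) = 0" for z
      using rec[of 0 0 "z + 1"] h_pos by (simp add: corner_def ac_simps)
    show "mat_int_pow B z $$ (h - 1, h - 1) = corner (z + 1)" if "0 \<le> z" for z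
    proof -
      obtain N where z: "z = int N" using \<open>0 \<le> z\<close> nonneg_eq_int by blast
      have "2 * int (h - 1) = int K - 1" using h_pos by (simp add: int_K of_nat_diff)
      then have "mat_int_pow B z $$ (h - 1, h - 1) = real (walks K (2 * N) (int K - 1) (int K - 1))"
        using h_pos by (simp add: z B_pow_eq_walks)
      also have "walks K (2 * N) (int K - 1) (int K - 1) = walks K (2 * N) 1 1"
        by (metis walks_reflect diff_diff_cancel)
      also have "\<dots> = walks K (Suc (Suc (2 * N))) 0 0"
        using h_pos by (intro walks_Suc_Suc_0_0[symmetric]) (simp add: K_def)
      also have "real \<dots> = corner (z + 1)"
        using corner_of_nat[of "Suc N"] by (simp add: z add.commute)
      finally show ?thesis .
    qed
  qed (use c0 in simp_all)
qed

definition C_ext :: "int \<Rightarrow> real" where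
  "C_ext N = (if even N then corner (N div 2) else 0)"

lemma C_eq_C_ext: "C K = C_ext"
proof -
  obtain c where ch: "c h = 1" and c0: "c 0 \<noteq> 0"
    and rec: "\<And>z i j. i < h \<Longrightarrow> j < h \<Longrightarrow> (\<Sum>p\<le>h. c p * mat_int_pow B (z + int p) $$ (i, j)) = 0"
    using B_int_pow_recurrence by blast
  define a where "a j = (if even j then c (j div 2) else 0)" for j
  show ?thesis
  proof (rule C_eqI[where d = "2 * h" and a = a])
    show "C_ext (int N) = real (C_nat K N)" for N
      by (cases "even N") (auto simp: C_ext_def C_nat_eq_walks corner_of_nat walks_odd elim!: evenE)
    show "(\<Sum>j\<le>2 * h. a j * C_ext (z + int j)) = 0" for z
    proof -
      have "(\<Sum>j\<le>2 * h. a j * C_ext (z + int j)) = (\<Sum>p\<le>h. c p * C_ext (z + 2 * int p))"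
        by (subst sum_atMost_double_even) (simp_all add: a_def)
      also have "\<dots> = 0"
      proof (cases "even z")
        case True
        then obtain y where "z = 2 * y" by blast
        then show ?thesis
          using rec[of 0 0 y] h_pos by (simp add: C_ext_def corner_def algebra_simps)
      qed (simp add: C_ext_def)
      finally show ?thesis .
    qed
  qed (simp_all add: a_def c0 ch)
qed

lemma C_double_eq_corner: "C K (2 * z) = corner z"
  by (simp add: C_eq_C_ext C_ext_def)

lemma det_hankel_corner:
  assumes "k \<le> h"
  shows "det (mat k k (\<lambda>(i, j). corner (int i + int j))) = 1"
proof -
  define P where "P = mat k k (\<lambda>(i, l). (B ^\<^sub>m i) $$ (0, l))"
  define Q where "Q = mat k k (\<lambda>(l, j). (B ^\<^sub>m j) $$ (l, 0))"
  have P: "P \<in> carrier_mat k k" and Q: "Q \<in> carrier_mat k k" by (simp_all add: P_def Q_def)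
  have "mat k k (\<lambda>(i, j). corner (int i + int j)) = P * Q"
  proof (rule eq_matI)
    fix i j assume "i < dim_row (P * Q)" "j < dim_col (P * Q)"
    then have i: "i < k" and j: "j < k" by (simp_all add: P_def Q_def)
    have "corner (int i + int j) = (B ^\<^sub>m i * B ^\<^sub>m j) $$ (0, 0)"
      by (simp add: corner_def mat_int_pow_add[OF B_carrier] det_B)
    also have "\<dots> = (\<Sum>l\<in>{0..<h}. (B ^\<^sub>m i) $$ (0, l) * (B ^\<^sub>m j) $$ (l, 0))"
      using h_pos by (simp add: scalar_prod_def)
    also have "\<dots> = (\<Sum>l\<in>{0..<k}. (B ^\<^sub>m i) $$ (0, l) * (B ^\<^sub>m j) $$ (l, 0))"
      using assms i by (intro sum.mono_neutral_right) (auto simp: B_pow_far)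
    also have "\<dots> = (P * Q) $$ (i, j)"
      using i j by (simp add: P_def Q_def scalar_prod_def)
    finally show "mat k k (\<lambda>(i, j). corner (int i + int j)) $$ (i, j) = (P * Q) $$ (i, j)"
      using i j by simp
  qed (simp_all add: P_def Q_def)
  moreover have "det P = 1"
    using assms by (intro det_unit_lower_triangular[OF P]) (auto simp: P_def B_pow_far B_pow_straight)
  moreover have "det Q = 1"
    using assms by (intro det_unit_upper_triangular[OF Q]) (auto simp: Q_def B_pow_far B_pow_straight)
  ultimately show ?thesis using P Q by (simp add: det_mult)
qed

lemma det_hankel_last_entry:
  assumes "m \<le> h"
  shows "det (mat m m (\<lambda>(r, r'). mat_int_pow B (int (m - 1 - r) + int (m - 1 - r')) $$ (h - 1, h - 1))) = 1"
proof -
  define P where "P = mat m m (\<lambda>(r, t). (B ^\<^sub>m (m - 1 - r)) $$ (h - 1, h - m + t))"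
  define Q where "Q = mat m m (\<lambda>(t, r'). (B ^\<^sub>m (m - 1 - r')) $$ (h - m + t, h - 1))"
  have P: "P \<in> carrier_mat m m" and Q: "Q \<in> carrier_mat m m" by (simp_all add: P_def Q_def)
  have "mat m m (\<lambda>(r, r'). mat_int_pow B (int (m - 1 - r) + int (m - 1 - r')) $$ (h - 1, h - 1)) = P * Q"
  proof (rule eq_matI)
    fix r r' assume "r < dim_row (P * Q)" "r' < dim_col (P * Q)"
    then have r: "r < m" and r': "r' < m" by (simp_all add: P_def Q_def)
    let ?f = "\<lambda>l. (B ^\<^sub>m (m - 1 - r)) $$ (h - 1, l) * (B ^\<^sub>m (m - 1 - r')) $$ (l, h - 1)"
    have "mat_int_pow B (int (m - 1 - r) + int (m - 1 - r')) $$ (h - 1, h - 1)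
        = (B ^\<^sub>m (m - 1 - r) * B ^\<^sub>m (m - 1 - r')) $$ (h - 1, h - 1)"
      by (simp add: mat_int_pow_add[OF B_carrier] det_B)
    also have "\<dots> = (\<Sum>l\<in>{0..<h}. ?f l)"
      using h_pos by (simp add: scalar_prod_def)
    also have "\<dots> = (\<Sum>l\<in>{h - m..<h}. ?f l)"
      using assms r by (intro sum.mono_neutral_right) (auto simp: B_pow_far)
    also have "\<dots> = (\<Sum>t\<in>{0..<m}. ?f (h - m + t))"
      using assms sum.shift_bounds_nat_ivl[of ?f 0 "h - m" m] by (simp add: add.commute)
    also have "\<dots> = (P * Q) $$ (r, r')"
      using r r' by (simp add: P_def Q_def scalar_prod_def)
    finally show "mat m m (\<lambda>(r, r'). mat_int_pow B (int (m - 1 - r) + int (m - 1 - r')) $$ (h - 1, h - 1)) $$ (r, r')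
        = (P * Q) $$ (r, r')"
      using r r' by simp
  qed (simp_all add: P_def Q_def)
  moreover have "det P = 1"
    using assms by (intro det_unit_upper_triangular[OF P]) (auto simp: P_def B_pow_far B_pow_straight)
  moreover have "det Q = 1"
    using assms by (intro det_unit_lower_triangular[OF Q]) (auto simp: Q_def B_pow_far B_pow_straight)
  ultimately show ?thesis using P Q by (simp add: det_mult)
qed

lemma det_int_pow_entries_shift:
  assumes v: "\<And>j. j < h \<Longrightarrow> v j < h"
  shows "det (mat h h (\<lambda>(j, j'). mat_int_pow B (e j + s + e' j') $$ (v j, v j')))
    = det (mat h h (\<lambda>(j, j'). mat_int_pow B (e j + e' j') $$ (v j, v j')))"
proof -
  have "det (mat h h (\<lambda>(j, j'). (mat_int_pow B (e j) * mat_int_pow B s * mat_int_pow B (e' j')) $$ (v j, v j')))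
    = det (mat_int_pow B s) * det (mat h h (\<lambda>(j, j'). (mat_int_pow B (e j) * mat_int_pow B (e' j')) $$ (v j, v j')))"
    using v by (intro det_selected_entries_of_products) auto
  then show ?thesis
    by (simp add: mat_int_pow_add[OF B_carrier, symmetric] det_B det_mat_int_pow[OF B_carrier])
qed

context
  fixes k m n :: nat
  assumes hkm: "k + m = h"
begin

definition exponent :: "nat \<Rightarrow> int" where
  "exponent j = (if j < k then int j else int (m - 1 - (j - k)))"

definition exponent' :: "nat \<Rightarrow> int" where
  "exponent' j = (if j < k then int j else int (m - 1 - (j - k)) - (int n + 2 * int m - 1))"

definition vertex :: "nat \<Rightarrow> nat" where
  "vertex j = (if j < k then 0 else h - 1)"

definition power_entries_mat :: "int \<Rightarrow> real mat" where
  "power_entries_mat s =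
    mat h h (\<lambda>(j, j'). mat_int_pow B (exponent j + s + exponent' j') $$ (vertex j, vertex j'))"

lemma power_entries_mat_carrier: "power_entries_mat s \<in> carrier_mat (k + m) (k + m)"
  using hkm by (simp add: power_entries_mat_def)

lemma det_power_entries_mat_shift: "det (power_entries_mat s) = det (power_entries_mat 0)"
  using det_int_pow_entries_shift[of vertex exponent s exponent'] h_pos
    det_int_pow_entries_shift[of vertex exponent 0 exponent']
  by (simp add: power_entries_mat_def vertex_def)

lemma det_power_entries_mat_upper:
  "det (power_entries_mat (int n + 2 * int m - 1))
    = det (mat k k (\<lambda>(i, j). corner (int n + 2 * int m - 1 + int i + int j)))"
  (is "det (power_entries_mat ?a) = _")
proof -
  let ?G = "power_entries_mat ?a"
  have "det ?G = det (mat k k (\<lambda>(i, j). ?G $$ (i, j))) * det (mat m m (\<lambda>(i, j). ?G $$ (k + i, k + j)))"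
  proof (rule det_block_upper_right_zero[OF power_entries_mat_carrier])
    fix i j assume ij: "i < k" "k \<le> j" "j < k + m"
    define N where "N = i + (m - 1 - (j - k))"
    have "exponent i + ?a + exponent' j = int N"
      using ij by (simp add: exponent_def exponent'_def N_def of_nat_diff)
    then have "?G $$ (i, j) = (B ^\<^sub>m N) $$ (0, h - 1)"
      using ij hkm by (simp add: power_entries_mat_def vertex_def)
    also have "\<dots> = 0" using ij hkm by (intro B_pow_far) (auto simp: N_def)
    finally show "?G $$ (i, j) = 0" .
  qed
  also have "mat k k (\<lambda>(i, j). ?G $$ (i, j)) = mat k k (\<lambda>(i, j). corner (?a + int i + int j))"
    using hkm by (intro cong_mat)
      (auto simp: power_entries_mat_def exponent_def exponent'_def vertex_def corner_def ac_simps)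
  also have "mat m m (\<lambda>(i, j). ?G $$ (k + i, k + j))
      = mat m m (\<lambda>(r, r'). mat_int_pow B (int (m - 1 - r) + int (m - 1 - r')) $$ (h - 1, h - 1))"
    using hkm by (intro cong_mat)
      (auto simp: power_entries_mat_def exponent_def exponent'_def vertex_def algebra_simps)
  finally show ?thesis using det_hankel_last_entry hkm by simp
qed

lemma det_power_entries_mat_lower:
  "det (power_entries_mat 0) = det (mat m m (\<lambda>(i, j). corner (- int n - int i - int j)))"
proof -
  let ?G = "power_entries_mat 0"
  have "det ?G = det (mat k k (\<lambda>(i, j). ?G $$ (i, j))) * det (mat m m (\<lambda>(i, j). ?G $$ (k + i, k + j)))"
  proof (rule det_block_lower_left_zero[OF power_entries_mat_carrier])
    fix i j assume ij: "k \<le> i" "i < k + m" "j < k"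
    define N where "N = m - 1 - (i - k) + j"
    have "exponent i + 0 + exponent' j = int N"
      using ij by (simp add: exponent_def exponent'_def N_def)
    then have "?G $$ (i, j) = (B ^\<^sub>m N) $$ (h - 1, 0)"
      using ij hkm by (simp add: power_entries_mat_def vertex_def)
    also have "\<dots> = 0" using ij hkm by (intro B_pow_far) (auto simp: N_def)
    finally show "?G $$ (i, j) = 0" .
  qed
  also have "mat k k (\<lambda>(i, j). ?G $$ (i, j)) = mat k k (\<lambda>(i, j). corner (int i + int j))"
    using hkm by (intro cong_mat)
      (auto simp: power_entries_mat_def exponent_def exponent'_def vertex_def corner_def)
  also have "mat m m (\<lambda>(i, j). ?G $$ (k + i, k + j)) = mat m m (\<lambda>(i, j). corner (- int n - int i - int j))"
  proof (rule cong_mat)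
    fix i j assume ij: "i < m" "j < m"
    have "exponent (k + i) + 0 + exponent' (k + j) = (- int n - int i - int j) - 1"
      using ij by (simp add: exponent_def exponent'_def of_nat_diff)
    then have "?G $$ (k + i, k + j) = mat_int_pow B (- int n - int i - int j - 1) $$ (h - 1, h - 1)"
      using ij hkm by (simp add: power_entries_mat_def vertex_def)
    also have "\<dots> = corner (- int n - int i - int j)"
      using B_int_pow_last_entry[of "- int n - int i - int j - 1"] by simp
    finally show "(\<lambda>(i, j). ?G $$ (k + i, k + j)) (i, j) = (\<lambda>(i, j). corner (- int n - int i - int j)) (i, j)"
      by simp
  qed simp_all
  finally show ?thesis using det_hankel_corner hkm by simp
qed

lemma hankel_duality:
  "det (mat k k (\<lambda>(i, j). corner (int n + 2 * int m - 1 + int i + int j)))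
    = det (mat m m (\<lambda>(i, j). corner (- int n - int i - int j)))"
  using det_power_entries_mat_shift det_power_entries_mat_upper det_power_entries_mat_lower by simp

end

end

theorem theorem15:
  fixes n k m :: nat
  shows "det (mat k k (\<lambda>(i, j). C (2*k + 2*m - 1) (2*int n + 2*int i + 2*int j + 4*int m - 2)))
       = det (mat m m (\<lambda>(i, j). C (2*k + 2*m - 1) (- 2*int n - 2*int i - 2*int j)))"
proof (cases "k + m = 0")
  case True
  then show ?thesis by simp
next
  case False
  interpret strip "k + m" by unfold_locales (use False in simp)
  have K: "2 * k + 2 * m - 1 = K" by (simp add: K_def)
  have "C K (2 * int n + 2 * int i + 2 * int j + 4 * int m - 2)
      = corner (int n + 2 * int m - 1 + int i + int j)"
    and "C K (- 2 * int n - 2 * int i - 2 * int j) = corner (- int n - int i - int j)" for i j :: nat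
    using C_double_eq_corner[of "int n + 2 * int m - 1 + int i + int j"]
      C_double_eq_corner[of "- int n - int i - int j"]
    by (simp_all add: algebra_simps)
  then show ?thesis unfolding K using hankel_duality[of k m n] by simp
qed

end
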